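(* Let $p\ge2$. The tightness potential $TP$ is strongly differentiable at every $\mu\in P_p(\mathbb{R}^d)$, with gradient plan (strong Fréchet subdifferential) $(\iota,4T_\mu)_\#\mu$.
   Context: $P_p(\mathbb{R}^d)$ is the set of Borel probability measures on $\mathbb{R}^d$ with finite $p$-th moment; $M_2^2(\mu)=\int\|x\|^2d\mu$; $S_\mu=\int yy^\top d\mu(y)$. The tightness potential is $TP(\mu)=\iint\big[\langle x,y\rangle^2-\tfrac1d\|x\|^2\|y\|^2\big]\,d\mu(x)\,d\mu(y)$ and the tightness operator is $T_\mu x=S_\mu x-\frac{M_2^2(\mu)}{d}x$. $\iota$ is the identity map and $(\iota,g)_\#\mu$ the pushforward of $\mu$ under $x\mapsto(x,g(x))$. Let $q=p/(p-1)$. For $\gamma\in P(\mathbb{R}^d\times\mathbb{R}^d)$ and $\nu\in P_p(\mathbb{R}^d)$, $\Gamma(\gamma,\nu)$ denotes the set of probability measures $\beta$ on $(\mathbb{R}^d)^3$ with $(\pi^1,\pi^2)_\#\beta=\gamma$ and $\pi^3_\#\beta=\nu$, and for $\mu=\pi^1_\#\gamma$, $C_{p,\beta}(\mu,\nu)=\big(\iiint\|x_1-x_3\|^p\,d\beta\big)^{1/p}$. A functional $F:P_p(\mathbb{R}^d)\to\mathbb{R}$ is strongly differentiable at $\mu$ with gradient plan $\gamma$ (where $\pi^1_\#\gamma=\mu$ and $\iint\|x_2\|^q d\gamma<\infty$) if for every $\nu\in P_p(\mathbb{R}^d)$ and every $\beta\in\Gamma(\gamma,\nu)$, $F(\nu)-F(\mu)=\iiint\langle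 x_2,x_3-x_1\rangle\,d\beta(x_1,x_2,x_3)+R_\beta$, where $|R_\beta|\le\omega(C_{p,\beta}(\mu,\nu))$ for a function $\omega$ depending only on $\mu$ with $\omega(r)/r\to0$ as $r\to0$. *)

theory Defs
  imports "HOL-Probability.Probability"
begin

definition Prob :: "'a::topological_space measure set" where
  "Prob = {\<mu>. prob_space \<mu> \<and> sets \<mu> = sets borel}"

definition Pp :: "real \<Rightarrow> 'a::euclidean_space measure set" where
  "Pp p = {\<mu>. \<mu> \<in> Prob \<and> integrable \<mu> (\<lambda>x. norm x powr p)}"

definition M2sq :: "'a::euclidean_space measure \<Rightarrow> real" where
  "M2sq \<mu> = (\<integral>x. (norm x)\<^sup>2 \<partial>\<mu>)"

definition Smat :: "'a::euclidean_space measure \<Rightarrow> 'a \<Rightarrow> 'a" where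
  "Smat \<mu> x = (\<integral>y. (y \<bullet> x) *\<^sub>R y \<partial>\<mu>)"

definition Top :: "'a::euclidean_space measure \<Rightarrow> 'a \<Rightarrow> 'a" where
  "Top \<mu> x = Smat \<mu> x - (M2sq \<mu> / real DIM('a)) *\<^sub>R x"

definition TP :: "'a::euclidean_space measure \<Rightarrow> real" where
  "TP \<mu> = (\<integral>x. (\<integral>y. (x \<bullet> y)\<^sup>2 - (norm x)\<^sup>2 * (norm y)\<^sup>2 / real DIM('a) \<partial>\<mu>) \<partial>\<mu>)"

definition Gam :: "('a::euclidean_space \<times> 'a) measure \<Rightarrow> 'a measure \<Rightarrow> ('a \<times> 'a \<times> 'a) measure set" where
  "Gam \<gamma> \<nu> = {\<beta>. \<beta> \<in> Prob \<and>
      distr \<beta> borel (\<lambda>(x1, x2, x3). (x1, x2)) = \<gamma> \<and>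
      distr \<beta> borel (\<lambda>(x1, x2, x3). x3) = \<nu>}"

definition Cpb :: "real \<Rightarrow> ('a::euclidean_space \<times> 'a \<times> 'a) measure \<Rightarrow> real" where
  "Cpb p \<beta> = (\<integral>(x1, x2, x3). norm (x1 - x3) powr p \<partial>\<beta>) powr (1 / p)"

definition strongly_differentiable ::
  "real \<Rightarrow> ('a::euclidean_space measure \<Rightarrow> real) \<Rightarrow> 'a measure \<Rightarrow> ('a \<times> 'a) measure \<Rightarrow> bool" where
  "strongly_differentiable p F \<mu> \<gamma> \<longleftrightarrow>
     \<gamma> \<in> Prob \<and> distr \<gamma> borel fst = \<mu> \<and>
     integrable \<gamma> (\<lambda>(x1, x2). norm x2 powr (p / (p - 1))) \<and>
     (\<exists>\<omega> :: real \<Rightarrow> real. ((\<lambda>r. \<omega> r / r) \<longlongrightarrow> 0) (at_right 0) \<and>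
        (\<forall>\<nu> \<in> Pp p. \<forall>\<beta> \<in> Gam \<gamma> \<nu>.
           \<bar>F \<nu> - F \<mu> - (\<integral>(x1, x2, x3). x2 \<bullet> (x3 - x1) \<partial>\<beta>)\<bar> \<le> \<omega> (Cpb p \<beta>)))"

end

(* Let S be the second-moment matrix of mu, so that TP mu = |S|_F^2 - (tr S)^2 / d is a quadratic
   form in S.  For a plan beta with displacement D = x3 - x1, the second-moment matrix of nu is
   S + B + B^T + C with B = E[D x1^T] and C = E[D D^T].  The first-order part 4 <S,B> - 4 tr S tr B / d
   of the expansion equals E[<4 T_mu x1, D>], the integral of <x2, x3 - x1>, because x2 = 4 T_mu x1
   beta-almost everywhere.  By Cauchy-Schwarz |B| <= sqrt (M_2^2(mu) E|D|^2) and |C| <= E|D|^2, so the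
   remainder is O(E|D|^2 + (E|D|^2)^2); since p >= 2, Lyapunov's inequality gives E|D|^2 <= C_{p,beta}^2,
   and the remainder is o(C_{p,beta}). *)

theory Submission
  imports Defs
begin

lemma powr_le_one_plus_powr:
  fixes t a b :: real
  assumes "t \<ge> 0" "0 \<le> a" "a \<le> b"
  shows "t powr a \<le> 1 + t powr b"
proof (cases "t \<le> 1")
  case True
  then have "t powr a \<le> 1" using assms by (intro powr_le1) auto
  then show ?thesis by (simp add: add_increasing2)
next
  case False
  then have "t powr a \<le> t powr b" using assms by (intro powr_mono) auto
  then show ?thesis by simp
qed

lemma norm_diff_powr_le:
  fixes a b :: "'a::real_normed_vector"
  assumes "p \<ge> 0"
  shows "norm (a - b) powr p \<le> 2 powr p * (norm a powr p + norm b powr p)"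
proof -
  define m where "m = max (norm a) (norm b)"
  have "norm (a - b) \<le> 2 * m" using norm_triangle_ineq4[of a b] unfolding m_def by linarith
  then have "norm (a - b) powr p \<le> 2 powr p * m powr p"
    using assms by (simp add: powr_mono2 flip: powr_mult)
  also have "m powr p \<le> norm a powr p + norm b powr p"
    unfolding m_def by (cases "norm a \<le> norm b") (auto simp: max_def)
  finally show ?thesis by simp
qed

lemma measurable_continuous_sets_borel:
  assumes "sets M = sets (borel :: 'b::topological_space measure)" "continuous_on UNIV f"
  shows "f \<in> borel_measurable M"
  using borel_measurable_continuous_onI[OF assms(2)] by (simp add: measurable_cong_sets[OF assms(1) refl])

lemma integrable_square_norm_if_powr:
  fixes f :: "'b \<Rightarrow> 'a::real_normed_vector"
  assumes "prob_space M" "f \<in> borel_measurable M" "p \<ge> 2" "integrable M (\<lambda>x. norm (f x) powr p)"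
  shows "integrable M (\<lambda>x. (norm (f x))\<^sup>2)"
proof -
  interpret prob_space M by fact
  have "integrable M (\<lambda>x. 1 + norm (f x) powr p)" using assms(4) by simp
  then show ?thesis
    by (rule Bochner_Integration.integrable_bound)
       (use assms(2,3) powr_le_one_plus_powr[of _ 2 p] in \<open>auto\<close>)
qed

lemma integrable_square_norm_Pp:
  assumes "p \<ge> 2" "\<mu> \<in> Pp p"
  shows "integrable \<mu> (\<lambda>x. (norm x)\<^sup>2)"
  using assms by (auto simp: Pp_def Prob_def
      intro!: integrable_square_norm_if_powr[where p = p] measurable_continuous_sets_borel)

lemma integrable_inner_mult_inner:
  fixes f g :: "'b \<Rightarrow> 'a::euclidean_space"
  assumes "f \<in> borel_measurable M" "g \<in> borel_measurable M"
    "integrable M (\<lambda>x. (norm (f x))\<^sup>2)" "integrable M (\<lambda>x. (norm (g x))\<^sup>2)"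
  shows "integrable M (\<lambda>x. (f x \<bullet> u) * (g x \<bullet> v))"
proof -
  have "integrable M (\<lambda>x. (norm u * norm v) * ((norm (f x))\<^sup>2 + (norm (g x))\<^sup>2))"
    using assms by simp
  then show ?thesis
  proof (rule Bochner_Integration.integrable_bound)
    show "(\<lambda>x. (f x \<bullet> u) * (g x \<bullet> v)) \<in> borel_measurable M" using assms by measurable
    show "AE x in M. norm ((f x \<bullet> u) * (g x \<bullet> v)) \<le> norm ((norm u * norm v) * ((norm (f x))\<^sup>2 + (norm (g x))\<^sup>2))"
    proof (rule AE_I2)
      fix x
      have "\<bar>(f x \<bullet> u) * (g x \<bullet> v)\<bar> \<le> (norm (f x) * norm u) * (norm (g x) * norm v)"
        unfolding abs_mult by (intro mult_mono Cauchy_Schwarz_ineq2) auto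
      also have "\<dots> = (norm u * norm v) * (norm (f x) * norm (g x))" by simp
      also have "\<dots> \<le> (norm u * norm v) * ((norm (f x))\<^sup>2 + (norm (g x))\<^sup>2)"
      proof -
        have "0 \<le> norm (f x) * norm (g x)" by simp
        then have "norm (f x) * norm (g x) \<le> (norm (f x))\<^sup>2 + (norm (g x))\<^sup>2"
          using sum_squares_bound[of "norm (f x)" "norm (g x)"] unfolding mult.assoc by linarith
        then show ?thesis by (intro mult_left_mono) auto
      qed
      finally show "norm ((f x \<bullet> u) * (g x \<bullet> v)) \<le> norm ((norm u * norm v) * ((norm (f x))\<^sup>2 + (norm (g x))\<^sup>2))"
        by simp
    qed
  qed
qed

lemma integral_mult_squared_le:
  fixes u v :: "'b \<Rightarrow> real"
  assumes "integrable M (\<lambda>x. (u x)\<^sup>2)" "integrable M (\<lambda>x. (v x)\<^sup>2)" "integrable M (\<lambda>x. u x * v x)"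
  shows "(\<integral>x. u x * v x \<partial>M)\<^sup>2 \<le> (\<integral>x. (u x)\<^sup>2 \<partial>M) * (\<integral>x. (v x)\<^sup>2 \<partial>M)"
proof -
  define A where "A = (\<integral>x. (u x)\<^sup>2 \<partial>M)"
  define B where "B = (\<integral>x. u x * v x \<partial>M)"
  define C where "C = (\<integral>x. (v x)\<^sup>2 \<partial>M)"
  have discr: "0 \<le> t\<^sup>2 * A - 2 * t * B + C" for t
  proof -
    have "0 \<le> (\<integral>x. (t * u x - v x)\<^sup>2 \<partial>M)" by simp
    also have "(\<lambda>x. (t * u x - v x)\<^sup>2) = (\<lambda>x. t\<^sup>2 * (u x)\<^sup>2 - (2 * t) * (u x * v x) + (v x)\<^sup>2)"
      by (auto simp: power2_eq_square algebra_simps)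
    also have "(\<integral>x. t\<^sup>2 * (u x)\<^sup>2 - (2 * t) * (u x * v x) + (v x)\<^sup>2 \<partial>M) = t\<^sup>2 * A - 2 * t * B + C"
      using assms unfolding A_def B_def C_def by simp
    finally show ?thesis .
  qed
  have "B\<^sup>2 \<le> A * C"
  proof (cases "A = 0")
    case True
    have "B = 0"
    proof (rule ccontr)
      assume "B \<noteq> 0"
      then show False using discr[of "(C + 1) / (2 * B)"] True by (simp add: field_simps)
    qed
    then show ?thesis using True by simp
  next
    case False
    then have "A > 0" unfolding A_def by (simp add: order_less_le)
    then show ?thesis using discr[of "B / A"] by (simp add: field_simps power2_eq_square)
  qed
  then show ?thesis unfolding A_def B_def C_def .
qed

lemma (in prob_space) lyapunov_inequality:
  fixes X :: "'a \<Rightarrow> real"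
  assumes "\<And>x. x \<in> space M \<Longrightarrow> X x \<ge> 0" "integrable M X" "integrable M (\<lambda>x. X x powr s)" "s \<ge> 1"
  shows "(\<integral>x. X x \<partial>M) \<le> (\<integral>x. X x powr s \<partial>M) powr (1 / s)"
proof -
  define I where "I = (\<integral>x. X x powr s \<partial>M)"
  have "I \<ge> 0" unfolding I_def by simp
  then consider "I = 0" | "s = 1" | "I > 0" "s > 1"
    using assms(4) by fastforce
  then show ?thesis
  proof cases
    case 1
    then have "AE x in M. X x powr s = 0"
      using assms(3) unfolding I_def by (subst integral_nonneg_eq_0_iff_AE[symmetric]) auto
    then have "AE x in M. X x = 0" by (auto simp: powr_eq_0_iff)
    then show ?thesis by (simp add: integral_eq_zero_AE)
  next
    case 2
    then have "(\<integral>x. X x powr s \<partial>M) = (\<integral>x. X x \<partial>M)"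
      using assms(1) by (intro Bochner_Integration.integral_cong) auto
    then show ?thesis using 2 by simp
  next
    case 3
    define s' where "s' = s / (s - 1)"
    have s': "s' > 1" "1 / s + 1 / s' = 1" unfolding s'_def using 3 by (auto simp: field_simps)
    define R where "R = I powr (1 / s)"
    have "R > 0" "R powr s = I" unfolding R_def using 3 by (auto simp: powr_powr)
    have Young: "X x / R \<le> X x powr s / (I * s) + 1 / s'" if "x \<in> space M" for x
      using Youngs_inequality[OF \<open>s > 1\<close> s', of "X x / R" 1] assms(1)[OF that] \<open>R > 0\<close> \<open>R powr s = I\<close>
      by (simp add: powr_divide)
    have "(\<integral>x. X x \<partial>M) / R = (\<integral>x. X x / R \<partial>M)" by simp
    also have "\<dots> \<le> (\<integral>x. X x powr s / (I * s) + 1 / s' \<partial>M)"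
      using Young assms(2,3) by (intro integral_mono) auto
    also have "\<dots> = 1" using assms(3) s'(2) 3 unfolding I_def by (simp add: prob_space)
    finally show ?thesis using \<open>R > 0\<close> unfolding R_def I_def by (simp add: field_simps)
  qed
qed

lemma integral_square_norm_le_powr_moment:
  fixes f :: "'b \<Rightarrow> 'a::real_normed_vector"
  assumes "prob_space M" "p \<ge> 2"
    "integrable M (\<lambda>w. (norm (f w))\<^sup>2)" "integrable M (\<lambda>w. norm (f w) powr p)"
  shows "(\<integral>w. (norm (f w))\<^sup>2 \<partial>M) \<le> ((\<integral>w. norm (f w) powr p \<partial>M) powr (1 / p))\<^sup>2"
proof -
  have sq: "(t\<^sup>2) powr (p / 2) = t powr p" if "t \<ge> 0" for t :: real
    using that by (simp add: powr_powr flip: powr_numeral)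
  have "(\<integral>w. (norm (f w))\<^sup>2 \<partial>M) \<le> (\<integral>w. ((norm (f w))\<^sup>2) powr (p / 2) \<partial>M) powr (1 / (p / 2))"
    using assms by (intro prob_space.lyapunov_inequality) (auto simp: sq)
  also have "\<dots> = ((\<integral>w. norm (f w) powr p \<partial>M) powr (1 / p))\<^sup>2"
    using assms(2) by (simp add: sq powr_powr flip: powr_numeral)
  finally show ?thesis .
qed

definition cross_moment :: "'b measure \<Rightarrow> ('b \<Rightarrow> 'a::euclidean_space) \<Rightarrow> ('b \<Rightarrow> 'a) \<Rightarrow> 'a \<Rightarrow> 'a \<Rightarrow> real" where
  "cross_moment M X Y i j = (\<integral>w. (X w \<bullet> i) * (Y w \<bullet> j) \<partial>M)"

definition second_moment :: "'a::euclidean_space measure \<Rightarrow> 'a \<Rightarrow> 'a \<Rightarrow> real" where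
  "second_moment \<mu> = cross_moment \<mu> (\<lambda>x. x) (\<lambda>x. x)"

lemma second_moment_commute: "second_moment \<mu> i j = second_moment \<mu> j i"
  by (simp add: second_moment_def cross_moment_def mult.commute)

lemma second_moment_distr:
  assumes "X \<in> borel_measurable M"
  shows "second_moment (distr M borel X) i j = cross_moment M X X i j"
  unfolding second_moment_def cross_moment_def using assms by (simp add: integral_distr)

lemma cross_moment_add:
  fixes X D :: "'b \<Rightarrow> 'a::euclidean_space"
  assumes "X \<in> borel_measurable M" "D \<in> borel_measurable M"
    "integrable M (\<lambda>w. (norm (X w))\<^sup>2)" "integrable M (\<lambda>w. (norm (D w))\<^sup>2)"
  shows "cross_moment M (\<lambda>w. X w + D w) (\<lambda>w. X w + D w) i j
    = cross_moment M X X i j + (cross_moment M D X i j + cross_moment M D X j i + cross_moment M D D i j)"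
proof -
  note int = integrable_inner_mult_inner[OF assms(1,1,3,3)] integrable_inner_mult_inner[OF assms(2,1,4,3)]
    integrable_inner_mult_inner[OF assms(2,2,4,4)]
  have "cross_moment M (\<lambda>w. X w + D w) (\<lambda>w. X w + D w) i j
    = (\<integral>w. (X w \<bullet> i) * (X w \<bullet> j) + ((D w \<bullet> i) * (X w \<bullet> j) + (D w \<bullet> j) * (X w \<bullet> i) + (D w \<bullet> i) * (D w \<bullet> j)) \<partial>M)"
    unfolding cross_moment_def by (intro Bochner_Integration.integral_cong) (auto simp: inner_add_left algebra_simps)
  then show ?thesis using int by (simp add: cross_moment_def)
qed

lemma abs_cross_moment_le:
  fixes X Y :: "'b \<Rightarrow> 'a::euclidean_space"
  assumes "X \<in> borel_measurable M" "Y \<in> borel_measurable M"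
    "integrable M (\<lambda>w. (norm (X w))\<^sup>2)" "integrable M (\<lambda>w. (norm (Y w))\<^sup>2)" "i \<in> Basis" "j \<in> Basis"
  shows "\<bar>cross_moment M X Y i j\<bar> \<le> sqrt ((\<integral>w. (norm (X w))\<^sup>2 \<partial>M) * (\<integral>w. (norm (Y w))\<^sup>2 \<partial>M))"
proof -
  have sq: "integrable M (\<lambda>w. (X w \<bullet> i)\<^sup>2)" "integrable M (\<lambda>w. (Y w \<bullet> j)\<^sup>2)"
    using integrable_inner_mult_inner[OF assms(1,1,3,3), of i i] integrable_inner_mult_inner[OF assms(2,2,4,4), of j j]
    by (simp_all add: power2_eq_square)
  have coord: "(z \<bullet> b)\<^sup>2 \<le> (norm z)\<^sup>2" if "b \<in> Basis" for z :: 'a and b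
    using Basis_le_norm[OF that, of z] by (metis abs_ge_zero power2_abs power_mono)
  have "(cross_moment M X Y i j)\<^sup>2 \<le> (\<integral>w. (X w \<bullet> i)\<^sup>2 \<partial>M) * (\<integral>w. (Y w \<bullet> j)\<^sup>2 \<partial>M)"
    unfolding cross_moment_def by (rule integral_mult_squared_le[OF sq integrable_inner_mult_inner[OF assms(1-4)]])
  also have "\<dots> \<le> (\<integral>w. (norm (X w))\<^sup>2 \<partial>M) * (\<integral>w. (norm (Y w))\<^sup>2 \<partial>M)"
    using sq assms(3,4) coord assms(5,6) by (intro mult_mono integral_mono integral_nonneg_AE) auto
  finally have "sqrt ((cross_moment M X Y i j)\<^sup>2) \<le> sqrt ((\<integral>w. (norm (X w))\<^sup>2 \<partial>M) * (\<integral>w. (norm (Y w))\<^sup>2 \<partial>M))"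
    by (rule real_sqrt_le_mono)
  then show ?thesis by simp
qed

definition tightness_pairing :: "'i set \<Rightarrow> ('i \<Rightarrow> 'i \<Rightarrow> real) \<Rightarrow> ('i \<Rightarrow> 'i \<Rightarrow> real) \<Rightarrow> real" where
  "tightness_pairing I A B
     = (\<Sum>i\<in>I. \<Sum>j\<in>I. A i j * B i j) - (\<Sum>i\<in>I. A i i) * (\<Sum>i\<in>I. B i i) / real (card I)"

lemma tightness_pairing_commute: "tightness_pairing I A B = tightness_pairing I B A"
  unfolding tightness_pairing_def by (simp add: mult.commute)

lemma tightness_pairing_add_right:
  "tightness_pairing I A (\<lambda>i j. B i j + C i j) = tightness_pairing I A B + tightness_pairing I A C"
  unfolding tightness_pairing_def by (simp add: distrib_left sum.distrib add_divide_distrib)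

lemma tightness_pairing_add_left:
  "tightness_pairing I (\<lambda>i j. A i j + B i j) C = tightness_pairing I A C + tightness_pairing I B C"
  unfolding tightness_pairing_def by (simp add: distrib_right sum.distrib add_divide_distrib)

lemma tightness_pairing_square_add:
  "tightness_pairing I (\<lambda>i j. A i j + B i j) (\<lambda>i j. A i j + B i j)
     = tightness_pairing I A A + 2 * tightness_pairing I A B + tightness_pairing I B B"
  unfolding tightness_pairing_add_left tightness_pairing_add_right tightness_pairing_commute[of I B A] by simp

lemma tightness_pairing_transpose_right:
  assumes "\<And>i j. A i j = A j i"
  shows "tightness_pairing I A (\<lambda>i j. B j i) = tightness_pairing I A B"
  unfolding tightness_pairing_def by (subst sum.swap) (simp add: assms)

lemma abs_tightness_pairing_le:
  assumes A: "\<And>i j. i \<in> I \<Longrightarrow> j \<in> I \<Longrightarrow> \<bar>A i j\<bar> \<le> a"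
    and B: "\<And>i j. i \<in> I \<Longrightarrow> j \<in> I \<Longrightarrow> \<bar>B i j\<bar> \<le> b"
  shows "\<bar>tightness_pairing I A B\<bar> \<le> 2 * (real (card I))\<^sup>2 * (a * b)"
proof (cases "finite I \<and> I \<noteq> {}")
  case False
  then have "card I = 0" "tightness_pairing I A B = 0"
    unfolding tightness_pairing_def by auto
  then show ?thesis by simp
next
  case True
  define d where "d = real (card I)"
  have "card I > 0" using True by (simp add: card_gt_0_iff)
  then have "d \<ge> 1" unfolding d_def by linarith
  from True obtain k where "k \<in> I" by auto
  then have "a \<ge> 0" "b \<ge> 0"
    using A[OF \<open>k \<in> I\<close> \<open>k \<in> I\<close>] B[OF \<open>k \<in> I\<close> \<open>k \<in> I\<close>] by linarith+
  have AB: "\<bar>A i j * B i j\<bar> \<le> a * b" if "i \<in> I" "j \<in> I" for i j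
    unfolding abs_mult using A[OF that] B[OF that] by (intro mult_mono) auto
  have "\<bar>\<Sum>j\<in>I. A i j * B i j\<bar> \<le> d * (a * b)" if "i \<in> I" for i
    unfolding d_def using AB that by (intro order_trans[OF sum_abs sum_bounded_above]) auto
  then have sum: "\<bar>\<Sum>i\<in>I. \<Sum>j\<in>I. A i j * B i j\<bar> \<le> d * (d * (a * b))"
    unfolding d_def by (rule order_trans[OF sum_abs sum_bounded_above]) auto
  have trA: "\<bar>\<Sum>i\<in>I. A i i\<bar> \<le> d * a" and trB: "\<bar>\<Sum>i\<in>I. B i i\<bar> \<le> d * b"
    unfolding d_def using A B by (auto intro!: order_trans[OF sum_abs sum_bounded_above])
  have "\<bar>(\<Sum>i\<in>I. A i i) * (\<Sum>i\<in>I. B i i) / d\<bar> = \<bar>\<Sum>i\<in>I. A i i\<bar> * \<bar>\<Sum>i\<in>I. B i i\<bar> / d"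
    using \<open>d \<ge> 1\<close> by (simp add: abs_mult)
  also have "\<dots> \<le> (d * a) * (d * b) / d"
    using trA trB \<open>d \<ge> 1\<close> by (intro divide_right_mono mult_mono) auto
  also have "\<dots> = 1 * (d * (a * b))" using \<open>d \<ge> 1\<close> by simp
  also have "\<dots> \<le> d * (d * (a * b))"
    using \<open>d \<ge> 1\<close> \<open>a \<ge> 0\<close> \<open>b \<ge> 0\<close> by (intro mult_right_mono) auto
  finally show ?thesis
    using sum abs_triangle_ineq4[of "\<Sum>i\<in>I. \<Sum>j\<in>I. A i j * B i j" "(\<Sum>i\<in>I. A i i) * (\<Sum>i\<in>I. B i i) / d"]
    unfolding tightness_pairing_def d_def[symmetric] power2_eq_square by linarith
qed

text \<open>In the application \<open>B\<close> and \<open>C\<close> are of first and second order in the displacement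
  \<open>x\<^sub>3 - x\<^sub>1\<close>, so only \<open>B\<close> enters the first-order term.\<close>
lemma tightness_pairing_linearization_error:
  assumes "\<And>i j. A i j = A j i"
    and A: "\<And>i j. i \<in> I \<Longrightarrow> j \<in> I \<Longrightarrow> \<bar>A i j\<bar> \<le> a"
    and B: "\<And>i j. i \<in> I \<Longrightarrow> j \<in> I \<Longrightarrow> \<bar>B i j\<bar> \<le> sqrt (a * c)"
    and C: "\<And>i j. i \<in> I \<Longrightarrow> j \<in> I \<Longrightarrow> \<bar>C i j\<bar> \<le> c"
    and "a \<ge> 0" "c \<ge> 0"
  defines "F \<equiv> \<lambda>i j. B i j + B j i + C i j"
  shows "\<bar>tightness_pairing I (\<lambda>i j. A i j + F i j) (\<lambda>i j. A i j + F i j) - tightness_pairing I A A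
      - 4 * tightness_pairing I A B\<bar> \<le> 20 * (real (card I))\<^sup>2 * (a + 1) * (c + c\<^sup>2)"
proof -
  define d where "d = real (card I)"
  define e where "e = 2 * sqrt (a * c) + c"
  have "tightness_pairing I A F = tightness_pairing I A (\<lambda>i j. B i j + B j i) + tightness_pairing I A C"
    unfolding F_def by (rule tightness_pairing_add_right)
  also have "tightness_pairing I A (\<lambda>i j. B i j + B j i) = 2 * tightness_pairing I A B"
    using tightness_pairing_add_right[of I A B "\<lambda>i j. B j i"] tightness_pairing_transpose_right[OF assms(1)]
    by simp
  finally have "tightness_pairing I A F = 2 * tightness_pairing I A B + tightness_pairing I A C" .
  then have expand: "tightness_pairing I (\<lambda>i j. A i j + F i j) (\<lambda>i j. A i j + F i j) - tightness_pairing I A A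
      - 4 * tightness_pairing I A B = 2 * tightness_pairing I A C + tightness_pairing I F F"
    unfolding tightness_pairing_square_add by simp
  have F: "\<bar>F i j\<bar> \<le> e" if "i \<in> I" "j \<in> I" for i j
    using B[OF that] B[OF that(2,1)] C[OF that] unfolding F_def e_def abs_le_iff by linarith
  have FF: "\<bar>tightness_pairing I F F\<bar> \<le> 2 * d\<^sup>2 * (e * e)"
    unfolding d_def by (rule abs_tightness_pairing_le[OF F F])
  have AC: "\<bar>tightness_pairing I A C\<bar> \<le> 2 * d\<^sup>2 * (a * c)"
    unfolding d_def by (rule abs_tightness_pairing_le[OF A C])
  have "e * e \<le> 8 * (a * c) + 2 * c\<^sup>2"
    using \<open>a \<ge> 0\<close> \<open>c \<ge> 0\<close> sum_squares_bound[of "2 * sqrt (a * c)" c]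
    by (simp add: e_def algebra_simps power2_eq_square)
  then have "2 * d\<^sup>2 * (e * e) \<le> 2 * d\<^sup>2 * (8 * (a * c) + 2 * c\<^sup>2)"
    by (intro mult_left_mono) auto
  with expand FF AC have "\<bar>tightness_pairing I (\<lambda>i j. A i j + F i j) (\<lambda>i j. A i j + F i j)
      - tightness_pairing I A A - 4 * tightness_pairing I A B\<bar> \<le> d\<^sup>2 * (20 * (a * c) + 4 * c\<^sup>2)"
    unfolding abs_le_iff by (simp add: algebra_simps)
  also have "\<dots> \<le> d\<^sup>2 * (20 * (a + 1) * (c + c\<^sup>2))"
    using \<open>a \<ge> 0\<close> \<open>c \<ge> 0\<close> by (intro mult_left_mono) (auto simp: algebra_simps power2_eq_square)
  finally show ?thesis unfolding d_def by (simp add: algebra_simps)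
qed

lemma TP_eq_tightness_pairing:
  fixes \<mu> :: "'a::euclidean_space measure"
  assumes "sets \<mu> = sets borel" "integrable \<mu> (\<lambda>x. (norm x)\<^sup>2)"
  shows "TP \<mu> = tightness_pairing Basis (second_moment \<mu>) (second_moment \<mu>)"
proof -
  define S where "S = second_moment \<mu>"
  have int: "integrable \<mu> (\<lambda>x. (x \<bullet> i) * (x \<bullet> j))" for i j
    using assms by (intro integrable_inner_mult_inner) (auto intro: measurable_continuous_sets_borel)
  have S: "S i j = (\<integral>x. (x \<bullet> i) * (x \<bullet> j) \<partial>\<mu>)" for i j
    unfolding S_def second_moment_def cross_moment_def ..
  have norm2: "(norm y)\<^sup>2 = (\<Sum>k\<in>Basis. (y \<bullet> k) * (y \<bullet> k))" for y :: 'a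
    by (simp add: power2_norm_eq_inner euclidean_inner[of y y])
  have inner2: "(x \<bullet> y)\<^sup>2 = (\<Sum>i\<in>Basis. \<Sum>j\<in>Basis. ((x \<bullet> i) * (x \<bullet> j)) * ((y \<bullet> i) * (y \<bullet> j)))"
    for x y :: 'a
    unfolding euclidean_inner[of x y] power2_eq_square sum_product
    by (intro sum.cong refl) (simp add: algebra_simps)
  have "(\<lambda>y. (x \<bullet> y)\<^sup>2 - (norm x)\<^sup>2 * (norm y)\<^sup>2 / real DIM('a))
    = (\<lambda>y. (\<Sum>i\<in>Basis. \<Sum>j\<in>Basis. ((x \<bullet> i) * (x \<bullet> j)) * ((y \<bullet> i) * (y \<bullet> j)))
        - ((norm x)\<^sup>2 / real DIM('a)) * (\<Sum>k\<in>Basis. (y \<bullet> k) * (y \<bullet> k)))" for x :: 'a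
    unfolding inner2 norm2 by simp
  then have inner: "(\<integral>y. (x \<bullet> y)\<^sup>2 - (norm x)\<^sup>2 * (norm y)\<^sup>2 / real DIM('a) \<partial>\<mu>)
      = (\<Sum>i\<in>Basis. \<Sum>j\<in>Basis. ((x \<bullet> i) * (x \<bullet> j)) * S i j) - ((norm x)\<^sup>2 / real DIM('a)) * (\<Sum>k\<in>Basis. S k k)"
    for x :: 'a
    using int by (simp add: S integral_sum integrable_sum)
  have "TP \<mu> = (\<integral>x. (\<Sum>i\<in>Basis. \<Sum>j\<in>Basis. S i j * ((x \<bullet> i) * (x \<bullet> j)))
      - (\<Sum>k\<in>Basis. S k k) / real DIM('a) * (\<Sum>k\<in>Basis. (x \<bullet> k) * (x \<bullet> k)) \<partial>\<mu>)"
    unfolding TP_def inner by (intro Bochner_Integration.integral_cong refl) (simp add: norm2 algebra_simps)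
  also have "\<dots> = (\<Sum>i\<in>Basis. \<Sum>j\<in>Basis. S i j * S i j) - (\<Sum>k\<in>Basis. S k k) / real DIM('a) * (\<Sum>k\<in>Basis. S k k)"
    using int by (simp add: S integral_sum integrable_sum)
  finally show ?thesis by (simp add: tightness_pairing_def S_def)
qed

lemma M2sq_eq_sum_second_moment:
  fixes \<mu> :: "'a::euclidean_space measure"
  assumes "sets \<mu> = sets borel" "integrable \<mu> (\<lambda>x. (norm x)\<^sup>2)"
  shows "M2sq \<mu> = (\<Sum>k\<in>Basis. second_moment \<mu> k k)"
proof -
  have "integrable \<mu> (\<lambda>x. (x \<bullet> k) * (x \<bullet> k))" for k
    using assms by (intro integrable_inner_mult_inner) (auto intro: measurable_continuous_sets_borel)
  then show ?thesis
    unfolding M2sq_def second_moment_def cross_moment_def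
    by (simp add: power2_norm_eq_inner euclidean_inner[of x x for x] integral_sum)
qed

lemma integrable_Smat_integrand:
  fixes \<mu> :: "'a::euclidean_space measure"
  assumes "sets \<mu> = sets borel" "integrable \<mu> (\<lambda>x. (norm x)\<^sup>2)"
  shows "integrable \<mu> (\<lambda>y. (y \<bullet> x) *\<^sub>R y)"
proof -
  have "integrable \<mu> (\<lambda>y. norm x * (norm y)\<^sup>2)" using assms(2) by simp
  then show ?thesis
  proof (rule Bochner_Integration.integrable_bound)
    show "(\<lambda>y. (y \<bullet> x) *\<^sub>R y) \<in> borel_measurable \<mu>"
      by (rule measurable_continuous_sets_borel[OF assms(1)]) (intro continuous_intros)
    have "\<bar>y \<bullet> x\<bar> * norm y \<le> (norm y * norm x) * norm y" for y :: 'a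
      by (intro mult_right_mono Cauchy_Schwarz_ineq2) auto
    then show "AE y in \<mu>. norm ((y \<bullet> x) *\<^sub>R y) \<le> norm (norm x * (norm y)\<^sup>2)"
      by (simp add: power2_eq_square mult_ac)
  qed
qed

lemma linear_Top:
  fixes \<mu> :: "'a::euclidean_space measure"
  assumes "sets \<mu> = sets borel" "integrable \<mu> (\<lambda>x. (norm x)\<^sup>2)"
  shows "linear (Top \<mu>)"
proof -
  note int = integrable_Smat_integrand[OF assms]
  have "Smat \<mu> (x + y) = Smat \<mu> x + Smat \<mu> y" "Smat \<mu> (c *\<^sub>R x) = c *\<^sub>R Smat \<mu> x" for x y c
    by (simp_all add: Smat_def inner_add_right scaleR_add_left Bochner_Integration.integral_add[OF int int]
        flip: scaleR_scaleR)
  then show ?thesis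
    by (intro linearI) (simp_all add: Top_def algebra_simps)
qed

lemma inner_Top_Basis:
  fixes \<mu> :: "'a::euclidean_space measure"
  assumes "sets \<mu> = sets borel" "integrable \<mu> (\<lambda>x. (norm x)\<^sup>2)" "i \<in> Basis"
  shows "Top \<mu> x \<bullet> i = (\<Sum>j\<in>Basis. second_moment \<mu> i j * (x \<bullet> j)) - M2sq \<mu> / real DIM('a) * (x \<bullet> i)"
proof -
  have int: "integrable \<mu> (\<lambda>y. (y \<bullet> i) * (y \<bullet> j))" for j
    using assms by (intro integrable_inner_mult_inner) (auto intro: measurable_continuous_sets_borel)
  have "Smat \<mu> x \<bullet> i = (\<integral>y. ((y \<bullet> x) *\<^sub>R y) \<bullet> i \<partial>\<mu>)"
    unfolding Smat_def using integrable_Smat_integrand[OF assms(1,2)] by (subst integral_inner_left) auto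
  also have "\<dots> = (\<integral>y. (\<Sum>j\<in>Basis. (x \<bullet> j) * ((y \<bullet> i) * (y \<bullet> j))) \<partial>\<mu>)"
    by (intro Bochner_Integration.integral_cong refl)
       (simp add: euclidean_inner[of _ x] sum_distrib_left mult_ac)
  also have "\<dots> = (\<Sum>j\<in>Basis. second_moment \<mu> i j * (x \<bullet> j))"
    using int by (simp add: integral_sum second_moment_def cross_moment_def mult.commute)
  finally show ?thesis unfolding Top_def by (simp add: inner_diff_left)
qed

lemma integral_inner_Top:
  fixes \<mu> :: "'a::euclidean_space measure" and X D :: "'b \<Rightarrow> 'a"
  assumes \<mu>: "sets \<mu> = sets borel" "integrable \<mu> (\<lambda>x. (norm x)\<^sup>2)"
    and "X \<in> borel_measurable M" "D \<in> borel_measurable M"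
    "integrable M (\<lambda>w. (norm (X w))\<^sup>2)" "integrable M (\<lambda>w. (norm (D w))\<^sup>2)"
  shows "(\<integral>w. Top \<mu> (X w) \<bullet> D w \<partial>M) = tightness_pairing Basis (second_moment \<mu>) (cross_moment M D X)"
proof -
  define S where "S = second_moment \<mu>"
  define tr where "tr = (\<Sum>k\<in>Basis. S k k)"
  have int: "integrable M (\<lambda>w. (D w \<bullet> i) * (X w \<bullet> j))" for i j
    by (rule integrable_inner_mult_inner[OF assms(4,3,6,5)])
  have "Top \<mu> x \<bullet> y = (\<Sum>i\<in>Basis. \<Sum>j\<in>Basis. S i j * ((y \<bullet> i) * (x \<bullet> j)))
      - tr / real DIM('a) * (\<Sum>i\<in>Basis. (y \<bullet> i) * (x \<bullet> i))" for x y
  proof -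
    have "M2sq \<mu> = tr" unfolding tr_def S_def by (rule M2sq_eq_sum_second_moment[OF \<mu>])
    then show ?thesis
      unfolding euclidean_inner[of "Top \<mu> x" y]
      by (simp add: inner_Top_Basis[OF \<mu>] flip: S_def)
         (simp add: sum_subtractf sum_distrib_left sum_divide_distrib right_diff_distrib mult_ac)
  qed
  then have "(\<integral>w. Top \<mu> (X w) \<bullet> D w \<partial>M)
      = (\<Sum>i\<in>Basis. \<Sum>j\<in>Basis. S i j * cross_moment M D X i j) - tr / real DIM('a) * (\<Sum>i\<in>Basis. cross_moment M D X i i)"
    using int by (simp add: cross_moment_def integral_sum integrable_sum)
  then show ?thesis unfolding tightness_pairing_def S_def tr_def by (simp add: mult_ac)
qed

lemma TP_distr_add_linearization_error:
  fixes X D :: "'b \<Rightarrow> 'a::euclidean_space"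
  assumes X: "X \<in> borel_measurable M" "integrable M (\<lambda>w. (norm (X w))\<^sup>2)"
    and D: "D \<in> borel_measurable M" "integrable M (\<lambda>w. (norm (D w))\<^sup>2)"
  defines "\<mu> \<equiv> distr M borel X" and "c \<equiv> \<integral>w. (norm (D w))\<^sup>2 \<partial>M"
  shows "\<bar>TP (distr M borel (\<lambda>w. X w + D w)) - TP \<mu> - (\<integral>w. 4 *\<^sub>R Top \<mu> (X w) \<bullet> D w \<partial>M)\<bar>
    \<le> 20 * (real DIM('a))\<^sup>2 * (M2sq \<mu> + 1) * (c + c\<^sup>2)"
proof -
  have XD: "(\<lambda>w. X w + D w) \<in> borel_measurable M" using X D by measurable
  have "integrable M (\<lambda>w. 4 * ((norm (X w))\<^sup>2 + (norm (D w))\<^sup>2))" using X D by simp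
  then have "integrable M (\<lambda>w. (norm (X w + D w))\<^sup>2)"
    by (rule Bochner_Integration.integrable_bound)
       (use XD norm_diff_powr_le[of 2 "X _" "- D _"] in \<open>auto intro!: AE_I2\<close>)
  then have \<nu>: "sets (distr M borel (\<lambda>w. X w + D w)) = sets borel"
    "integrable (distr M borel (\<lambda>w. X w + D w)) (\<lambda>x. (norm x)\<^sup>2)"
    using XD by (auto simp: integrable_distr_eq)
  have \<mu>: "sets \<mu> = sets borel" "integrable \<mu> (\<lambda>x. (norm x)\<^sup>2)"
    unfolding \<mu>_def using X by (auto simp: integrable_distr_eq)
  define m where "m = M2sq \<mu>"
  have m: "m = (\<integral>w. (norm (X w))\<^sup>2 \<partial>M)" "m \<ge> 0"
    unfolding m_def M2sq_def \<mu>_def using X by (simp_all add: integral_distr)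
  have "c \<ge> 0" unfolding c_def by simp
  define A B C where "A = second_moment \<mu>" and "B = cross_moment M D X" and "C = cross_moment M D D"
  have A: "A i j = cross_moment M X X i j" for i j
    unfolding A_def \<mu>_def by (rule second_moment_distr[OF X(1)])
  have "second_moment (distr M borel (\<lambda>w. X w + D w)) i j = A i j + (B i j + B j i + C i j)" for i j
    using second_moment_distr[OF XD] cross_moment_add[OF X(1) D(1) X(2) D(2)] by (simp add: A B_def C_def)
  then have "TP (distr M borel (\<lambda>w. X w + D w))
      = tightness_pairing Basis (\<lambda>i j. A i j + (B i j + B j i + C i j)) (\<lambda>i j. A i j + (B i j + B j i + C i j))"
    using TP_eq_tightness_pairing[OF \<nu>] by presburger
  moreover have "TP \<mu> = tightness_pairing Basis A A" unfolding A_def by (rule TP_eq_tightness_pairing[OF \<mu>])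
  moreover have "(\<integral>w. 4 *\<^sub>R Top \<mu> (X w) \<bullet> D w \<partial>M) = 4 * tightness_pairing Basis A B"
    using integral_inner_Top[OF \<mu> X(1) D(1) X(2) D(2)] by (simp add: A_def B_def)
  moreover have "\<bar>tightness_pairing Basis (\<lambda>i j. A i j + (B i j + B j i + C i j))
      (\<lambda>i j. A i j + (B i j + B j i + C i j)) - tightness_pairing Basis A A - 4 * tightness_pairing Basis A B\<bar>
      \<le> 20 * (real DIM('a))\<^sup>2 * (m + 1) * (c + c\<^sup>2)"
  proof (rule tightness_pairing_linearization_error)
    show "A i j = A j i" for i j unfolding A_def by (rule second_moment_commute)
    show "\<bar>A i j\<bar> \<le> m" if "i \<in> Basis" "j \<in> Basis" for i j
      using abs_cross_moment_le[OF X(1) X(1) X(2) X(2) that] m by (simp add: A)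
    show "\<bar>B i j\<bar> \<le> sqrt (m * c)" if "i \<in> Basis" "j \<in> Basis" for i j
      using abs_cross_moment_le[OF D(1) X(1) D(2) X(2) that] m by (simp add: B_def c_def mult.commute)
    show "\<bar>C i j\<bar> \<le> c" if "i \<in> Basis" "j \<in> Basis" for i j
      using abs_cross_moment_le[OF D(1) D(1) D(2) D(2) that] \<open>c \<ge> 0\<close> by (simp add: C_def c_def)
  qed fact+
  ultimately show ?thesis unfolding m_def by simp
qed

lemma TP_distr_linearization_error:
  fixes X Y :: "'b \<Rightarrow> 'a::euclidean_space"
  assumes M: "prob_space M" and X: "X \<in> borel_measurable M" "integrable M (\<lambda>w. (norm (X w))\<^sup>2)"
    and Y: "Y \<in> borel_measurable M" and p: "p \<ge> 2" "integrable M (\<lambda>w. norm (X w - Y w) powr p)"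
  defines "\<mu> \<equiv> distr M borel X" and "r \<equiv> (\<integral>w. norm (X w - Y w) powr p \<partial>M) powr (1 / p)"
  shows "\<bar>TP (distr M borel Y) - TP \<mu> - (\<integral>w. 4 *\<^sub>R Top \<mu> (X w) \<bullet> (Y w - X w) \<partial>M)\<bar>
    \<le> 20 * (real DIM('a))\<^sup>2 * (M2sq \<mu> + 1) * (r\<^sup>2 + r ^ 4)"
proof -
  define D where "D = (\<lambda>w. Y w - X w)"
  define c where "c = (\<integral>w. (norm (D w))\<^sup>2 \<partial>M)"
  have D: "D \<in> borel_measurable M" using X Y unfolding D_def by measurable
  have Dp: "integrable M (\<lambda>w. norm (D w) powr p)" using p by (simp add: D_def norm_minus_commute)
  have D2: "integrable M (\<lambda>w. (norm (D w))\<^sup>2)" by (rule integrable_square_norm_if_powr[OF M D p(1) Dp])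
  have "0 \<le> c" "c \<le> r\<^sup>2"
    using integral_square_norm_le_powr_moment[OF M p(1) D2 Dp]
    by (simp_all add: c_def r_def D_def norm_minus_commute)
  then have "c + c\<^sup>2 \<le> r\<^sup>2 + r ^ 4" using power_mono[of c "r\<^sup>2" 2] by simp
  have "(\<lambda>w. X w + D w) = Y" by (simp add: D_def)
  then have "\<bar>TP (distr M borel Y) - TP \<mu> - (\<integral>w. 4 *\<^sub>R Top \<mu> (X w) \<bullet> (Y w - X w) \<partial>M)\<bar>
      \<le> 20 * (real DIM('a))\<^sup>2 * (M2sq \<mu> + 1) * (c + c\<^sup>2)"
    using TP_distr_add_linearization_error[OF X D D2] unfolding \<mu>_def c_def D_def by simp
  also have "\<dots> \<le> 20 * (real DIM('a))\<^sup>2 * (M2sq \<mu> + 1) * (r\<^sup>2 + r ^ 4)"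
    using \<open>c + c\<^sup>2 \<le> r\<^sup>2 + r ^ 4\<close> by (intro mult_left_mono) (auto simp: M2sq_def)
  finally show ?thesis .
qed

lemma Gam_graph_marginals:
  fixes \<mu> \<nu> :: "'a::euclidean_space measure"
  assumes \<beta>: "\<beta> \<in> Gam (distr \<mu> borel (\<lambda>x. (x, g x))) \<nu>"
    and \<mu>: "sets \<mu> = sets borel" and g: "continuous_on UNIV g"
  shows "distr \<beta> borel fst = \<mu>" "distr \<beta> borel (\<lambda>w. snd (snd w)) = \<nu>"
    "AE w in \<beta>. fst (snd w) = g (fst w)"
proof -
  have "sets \<beta> = sets borel" and \<beta>12: "distr \<beta> borel (\<lambda>(x1, x2, x3). (x1, x2)) = distr \<mu> borel (\<lambda>x. (x, g x))"
    and \<beta>3: "distr \<beta> borel (\<lambda>(x1, x2, x3). x3) = \<nu>"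
    using \<beta> by (auto simp: Gam_def Prob_def)
  then have pr12: "(\<lambda>(x1::'a, x2::'a, x3::'a). (x1, x2)) \<in> borel_measurable \<beta>"
    by (intro measurable_continuous_sets_borel) (auto simp: case_prod_unfold intro!: continuous_intros)
  have graph: "(\<lambda>x. (x, g x)) \<in> borel_measurable \<mu>"
    by (intro measurable_continuous_sets_borel[OF \<mu>] continuous_intros g)
  have fst: "fst \<in> borel_measurable (borel :: ('a \<times> 'a) measure)"
    by (intro borel_measurable_continuous_onI continuous_intros)
  have "distr \<beta> borel fst = distr \<beta> borel (fst \<circ> (\<lambda>(x1, x2, x3). (x1, x2)))"
    by (simp add: comp_def case_prod_unfold)
  also have "\<dots> = distr (distr \<beta> borel (\<lambda>(x1, x2, x3). (x1, x2))) borel fst"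
    by (rule distr_distr[OF fst pr12, symmetric])
  also have "\<dots> = \<mu>"
    unfolding \<beta>12 using \<mu> by (simp add: distr_distr[OF fst graph] comp_def distr_id2)
  finally show "distr \<beta> borel fst = \<mu>" .
  show "distr \<beta> borel (\<lambda>w. snd (snd w)) = \<nu>" using \<beta>3 by (simp add: case_prod_unfold)
  have "closed {z :: 'a \<times> 'a. snd z = g (fst z)}"
    by (intro closed_Collect_eq continuous_intros continuous_on_compose2[OF g]) auto
  then have graph_set: "{z \<in> space borel. snd z = g (fst z)} \<in> sets (borel :: ('a \<times> 'a) measure)"
    by simp
  have "AE z in distr \<mu> borel (\<lambda>x. (x, g x)). snd z = g (fst z)"
    by (subst AE_distr_iff[OF graph graph_set]) simp
  then have "AE w in \<beta>. snd ((\<lambda>(x1, x2, x3). (x1, x2)) w) = g (fst ((\<lambda>(x1, x2, x3). (x1, x2)) w))"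
    unfolding \<beta>12[symmetric] by (subst (asm) AE_distr_iff[OF pr12 graph_set])
  then show "AE w in \<beta>. fst (snd w) = g (fst w)" by (simp add: case_prod_unfold)
qed

lemma TP_Gam_linearization_error:
  fixes \<mu> \<nu> :: "'a::euclidean_space measure"
  assumes p: "p \<ge> 2" and \<mu>: "\<mu> \<in> Pp p" and \<nu>: "\<nu> \<in> Pp p"
    and \<beta>: "\<beta> \<in> Gam (distr \<mu> borel (\<lambda>x. (x, 4 *\<^sub>R Top \<mu> x))) \<nu>"
  shows "\<bar>TP \<nu> - TP \<mu> - (\<integral>(x1, x2, x3). x2 \<bullet> (x3 - x1) \<partial>\<beta>)\<bar>
    \<le> 20 * (real DIM('a))\<^sup>2 * (M2sq \<mu> + 1) * ((Cpb p \<beta>)\<^sup>2 + (Cpb p \<beta>) ^ 4)"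
proof -
  have sets: "sets \<mu> = sets borel" "sets \<nu> = sets borel" "sets \<beta> = sets borel"
    and prob: "prob_space \<mu>" "prob_space \<nu>" "prob_space \<beta>"
    and moment: "integrable \<mu> (\<lambda>x. norm x powr p)" "integrable \<nu> (\<lambda>x. norm x powr p)"
    using \<mu> \<nu> \<beta> by (auto simp: Pp_def Prob_def Gam_def)
  have square: "integrable \<mu> (\<lambda>x. (norm x)\<^sup>2)" "integrable \<nu> (\<lambda>x. (norm x)\<^sup>2)"
    using integrable_square_norm_Pp[OF p] \<mu> \<nu> by auto
  have Top: "continuous_on UNIV (Top \<mu>)"
    using linear_Top[OF sets(1) square(1)] by (intro linear_continuous_on) (simp add: linear_conv_bounded_linear)
  then have "continuous_on UNIV (\<lambda>x. 4 *\<^sub>R Top \<mu> x)" by (intro continuous_intros)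
  note marginals = Gam_graph_marginals[OF \<beta> sets(1) this]
  define X Y where "X = (\<lambda>w::'a \<times> 'a \<times> 'a. fst w)" and "Y = (\<lambda>w::'a \<times> 'a \<times> 'a. snd (snd w))"
  have XY: "X \<in> borel_measurable \<beta>" "Y \<in> borel_measurable \<beta>"
    unfolding X_def Y_def by (auto intro!: measurable_continuous_sets_borel[OF sets(3)] continuous_intros)
  have \<mu>X: "distr \<beta> borel X = \<mu>" and \<nu>Y: "distr \<beta> borel Y = \<nu>"
    using marginals(1,2) by (simp_all add: X_def Y_def)
  have "integrable \<beta> (\<lambda>w. (norm (X w))\<^sup>2)" "integrable \<beta> (\<lambda>w. norm (X w) powr p)"
    "integrable \<beta> (\<lambda>w. (norm (Y w))\<^sup>2)" "integrable \<beta> (\<lambda>w. norm (Y w) powr p)"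
    using square moment XY unfolding \<mu>X[symmetric] \<nu>Y[symmetric] by (simp_all add: integrable_distr_eq)
  note integrable = this
  have "integrable \<beta> (\<lambda>w. 2 powr p * (norm (X w) powr p + norm (Y w) powr p))"
    using integrable(2,4) by simp
  then have "integrable \<beta> (\<lambda>w. norm (X w - Y w) powr p)"
    by (rule Bochner_Integration.integrable_bound) (use XY p in \<open>auto intro!: AE_I2 norm_diff_powr_le\<close>)
  note bound = TP_distr_linearization_error[OF prob(3) XY(1) integrable(1) XY(2) p this]
  have "(\<integral>(x1, x2, x3). x2 \<bullet> (x3 - x1) \<partial>\<beta>) = (\<integral>w. 4 *\<^sub>R Top \<mu> (X w) \<bullet> (Y w - X w) \<partial>\<beta>)"
    using marginals(3)
    by (intro integral_cong_AE)
       (auto simp: X_def Y_def case_prod_unfold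
         intro!: measurable_continuous_sets_borel[OF sets(3)] continuous_intros continuous_on_compose2[OF Top])
  then show ?thesis
    using bound unfolding \<mu>X \<nu>Y by (simp add: Cpb_def X_def Y_def case_prod_unfold norm_minus_commute)
qed

lemma linear_graph_plan:
  fixes \<mu> :: "'a::euclidean_space measure" and L :: "'a \<Rightarrow> 'b::euclidean_space"
  assumes \<mu>: "\<mu> \<in> Prob" "integrable \<mu> (\<lambda>x. (norm x)\<^sup>2)" and L: "bounded_linear L" and q: "0 < q" "q \<le> 2"
  shows "distr \<mu> borel (\<lambda>x. (x, L x)) \<in> Prob"
    "distr (distr \<mu> borel (\<lambda>x. (x, L x))) borel fst = \<mu>"
    "integrable (distr \<mu> borel (\<lambda>x. (x, L x))) (\<lambda>(x1, x2). norm x2 powr q)"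
proof -
  have sets: "sets \<mu> = sets borel" and "prob_space \<mu>" using \<mu> by (auto simp: Prob_def)
  interpret prob_space \<mu> by fact
  have graph: "(\<lambda>x. (x, L x)) \<in> borel_measurable \<mu>"
    by (intro measurable_continuous_sets_borel[OF sets] continuous_intros linear_continuous_on L)
  show "distr \<mu> borel (\<lambda>x. (x, L x)) \<in> Prob"
    unfolding Prob_def using prob_space.prob_space_distr[OF \<open>prob_space \<mu>\<close> graph] by simp
  have fst: "fst \<in> borel_measurable (borel :: ('a \<times> 'b) measure)"
    by (intro borel_measurable_continuous_onI continuous_intros)
  show "distr (distr \<mu> borel (\<lambda>x. (x, L x))) borel fst = \<mu>"
    using sets by (simp add: distr_distr[OF fst graph] comp_def distr_id2)
  obtain K where K: "\<And>x. norm (L x) \<le> norm x * K" using bounded_linear.pos_bounded[OF L] by blast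
  have "integrable \<mu> (\<lambda>x. 1 + K\<^sup>2 * (norm x)\<^sup>2)" using \<mu>(2) by simp
  then have "integrable \<mu> (\<lambda>x. norm (L x) powr q)"
  proof (rule Bochner_Integration.integrable_bound)
    have [measurable]: "L \<in> borel_measurable \<mu>"
      by (intro measurable_continuous_sets_borel[OF sets] linear_continuous_on L)
    show "(\<lambda>x. norm (L x) powr q) \<in> borel_measurable \<mu>" by measurable
    have "norm (L x) powr q \<le> 1 + (norm x * K)\<^sup>2" for x
      using powr_le_one_plus_powr[of "norm (L x)" q 2] q K[of x]
      by (simp add: power_mono order_trans[OF _ add_left_mono])
    then show "AE x in \<mu>. norm (norm (L x) powr q) \<le> norm (1 + K\<^sup>2 * (norm x)\<^sup>2)"
      by (simp add: power_mult_distrib mult.commute)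
  qed
  moreover have "(\<lambda>(x1::'a, x2::'b). norm x2 powr q) \<in> borel_measurable borel"
    unfolding case_prod_unfold by (intro powr_real_measurable borel_measurable_continuous_onI continuous_intros)
  ultimately show "integrable (distr \<mu> borel (\<lambda>x. (x, L x))) (\<lambda>(x1, x2). norm x2 powr q)"
    by (simp add: integrable_distr_eq[OF graph])
qed

theorem mainTheorem7:
  fixes p :: real and \<mu> :: "'a::euclidean_space measure"
  assumes "p \<ge> 2" and "\<mu> \<in> Pp p"
  shows "strongly_differentiable p TP \<mu> (distr \<mu> borel (\<lambda>x. (x, 4 *\<^sub>R Top \<mu> x)))"
proof -
  have \<mu>: "\<mu> \<in> Prob" "sets \<mu> = sets borel" using assms(2) by (auto simp: Pp_def Prob_def)
  have square: "integrable \<mu> (\<lambda>x. (norm x)\<^sup>2)" by (rule integrable_square_norm_Pp[OF assms])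
  have L: "bounded_linear (\<lambda>x. 4 *\<^sub>R Top \<mu> x)"
    using linear_Top[OF \<mu>(2) square] by (intro bounded_linear_const_scaleR) (simp add: linear_conv_bounded_linear)
  have q: "0 < p / (p - 1)" "p / (p - 1) \<le> 2" using assms(1) by (auto simp: field_simps)
  note plan = linear_graph_plan[OF \<mu>(1) square L q]
  define K where "K = 20 * (real DIM('a))\<^sup>2 * (M2sq \<mu> + 1)"
  have "((\<lambda>r. K * (r + r ^ 3)) \<longlongrightarrow> 0) (at_right 0)"
    by (rule tendsto_eq_intros refl | simp)+
  then have "((\<lambda>r. K * (r\<^sup>2 + r ^ 4) / r) \<longlongrightarrow> 0) (at_right 0)"
    by (rule Lim_transform_eventually)
       (auto simp: eventually_at_right_less field_simps power2_eq_square power3_eq_cube power4_eq_xxxx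
         intro: eventually_mono[OF eventually_at_right_less])
  moreover note TP_Gam_linearization_error[OF assms]
  ultimately show ?thesis
    unfolding strongly_differentiable_def
    by (intro conjI plan exI[where x = "\<lambda>r. K * (r\<^sup>2 + r ^ 4)"] ballI) (auto simp: K_def)
qed

end
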